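(* Let $(k_n)$ be a sequence of positive integers with $2^{k_n}/n\to\infty$. Then, under the conditional distribution given $X_n^*=2^{k_n}$, \[ \frac{S_n}{X_n^*}-\frac{n k_n}{2^{k_n}}\xrightarrow{\ \mathbb{P}\ }1 , \] i.e. for every $\varepsilon>0$, $\mathbb{P}\big\{\big|\frac{S_n}{X_n^*}-\frac{nk_n}{2^{k_n}}-1\big|>\varepsilon\ \big|\ X_n^*=2^{k_n}\big\}\to0$.
   Context: $X_1,X_2,\ldots$ are iid with $\mathbb{P}\{X_i=2^k\}=2^{-k}$, $k\in\{1,2,\ldots\}$; $S_n=\sum_{i\le n}X_i$, $X_n^*=\max_{i\le n}X_i$. *)

theory Defs
  imports "HOL-Probability.Probability"
begin

definition S :: "(nat \<Rightarrow> 'a \<Rightarrow> real) \<Rightarrow> nat \<Rightarrow> 'a \<Rightarrow> real" where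
  "S X n \<omega> = (\<Sum>i\<in>{1..n}. X i \<omega>)"

definition Xmax :: "(nat \<Rightarrow> 'a \<Rightarrow> real) \<Rightarrow> nat \<Rightarrow> 'a \<Rightarrow> real" where
  "Xmax X n \<omega> = Max ((\<lambda>i. X i \<omega>) ` {1..n})"

end

theory Submission
  imports Defs "HOL-Real_Asymp.Real_Asymp"
begin

text \<open>
  Write \<open>m = 2^k\<close>. On the event \<open>X\<^sup>*\<^sub>n = m\<close> some \<open>X\<^sub>i\<close> equals \<open>m\<close> and all other summands are
  at most \<open>m\<close>, so \<open>S\<^sub>n/X\<^sup>*\<^sub>n - nk/m - 1\<close> equals, up to the negligible \<open>k/m\<close>, the sum of the
  \<open>n - 1\<close> variables \<open>(X\<^sub>j 1{X\<^sub>j \<le> m} - k)/m\<close>, \<open>j \<noteq> i\<close>. These are independent of \<open>X\<^sub>i\<close>, centred,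
  and have second moment at most \<open>2/m\<close>, so Chebyshev's inequality bounds the joint probability
  by \<open>O(n\<^sup>2/(\<epsilon>\<^sup>2m\<^sup>2))\<close>. On the other hand \<open>P{X\<^sup>*\<^sub>n = m} \<ge> n/(2m)\<close> as soon as \<open>4n \<le> m\<close>, because
  each of the \<open>n\<close> disjoint events "\<open>X\<^sub>i = m\<close> and all other \<open>X\<^sub>j < m\<close>" has probability at least
  \<open>(1/m)(1 - 2/m)\<^sup>n\<^sup>-\<^sup>1\<close>. Hence the conditional probability is \<open>O(n/(\<epsilon>\<^sup>2m))\<close>, which tends to \<open>0\<close>.
\<close>

lemma abs_gt_half_of_abs_diff_gt:
  fixes e t a :: real
  assumes "e < \<bar>t - a\<bar>" "0 \<le> a" "a \<le> e / 2"
  shows "e / 2 < \<bar>t\<bar>"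
  using assms by (cases "t \<ge> 0"; cases "t - a \<ge> 0") auto

lemma sum_power2_le: "(\<Sum>l\<in>{1..k}. (2::real) ^ l) \<le> 2 * 2 ^ k"
  by (induction k) (simp_all add: sum.cl_ivl_Suc)

lemma sum_inverse_power2:
  assumes "k \<ge> 1"
  shows "(\<Sum>l\<in>{1..<k}. 1 / (2::real) ^ l) = 1 - 2 / 2 ^ k"
  using assms
proof (induction k rule: dec_induct)
  case (step k)
  then show ?case by (simp add: atLeastLessThanSuc field_simps)
qed simp

text \<open>The truncation \<open>x 1{0 < x \<le> 2^k}\<close> has mean \<open>k\<close> under the distribution of \<open>X\<^sub>i\<close>.\<close>

definition centred_trunc :: "nat \<Rightarrow> real \<Rightarrow> real" where
  "centred_trunc k x = (indicator {0<..(2::real) ^ k} x * x - real k) / 2 ^ k"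

lemma centred_trunc_measurable [measurable]: "centred_trunc k \<in> borel_measurable borel"
  unfolding centred_trunc_def by measurable

lemma abs_centred_trunc_le: "\<bar>centred_trunc k x\<bar> \<le> 1 + real k"
proof -
  have "\<bar>indicator {0<..(2::real) ^ k} x * x - real k\<bar> \<le> 2 ^ k + real k"
    by (auto simp: indicator_def)
  also have "\<dots> \<le> (1 + real k) * 2 ^ k"
    using mult_left_mono[of 1 "(2::real) ^ k" "real k"] by (simp add: algebra_simps)
  finally show ?thesis
    unfolding centred_trunc_def by (simp add: abs_divide divide_le_eq)
qed

lemma sum_prod_indicator_unique_max_le:
  fixes x :: "'i \<Rightarrow> real"
  assumes "finite N"
  shows "(\<Sum>i\<in>N. \<Prod>t\<in>N. indicator (if t = i then {m} else {..<m}) (x t)) \<le> (indicator {m} (Max (x ` N)) :: real)"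
proof (cases "\<exists>i\<in>N. x i = m \<and> (\<forall>t\<in>N - {i}. x t < m)")
  case True
  then obtain i where i: "i \<in> N" "x i = m" "\<forall>t\<in>N - {i}. x t < m" by blast
  have "Max (x ` N) = m"
    using assms i by (intro Max_eqI) (auto intro: less_imp_le)
  moreover have "(\<Prod>t\<in>N. indicator (if t = i' then {m} else {..<m}) (x t)) = (if i' = i then 1 else 0 :: real)"
    if "i' \<in> N" for i'
    using assms i that by (auto simp: prod_zero_iff intro!: prod.neutral bexI[of _ i])
  then have "(\<Sum>i'\<in>N. \<Prod>t\<in>N. indicator (if t = i' then {m} else {..<m}) (x t))
      = (\<Sum>i'\<in>N. if i' = i then 1 else 0 :: real)"
    by (intro sum.cong) auto
  ultimately show ?thesis
    using assms i(1) by simp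
next
  case False
  then have "(\<Prod>t\<in>N. indicator (if t = i then {m} else {..<m}) (x t)) = (0::real)" if "i \<in> N" for i
    using assms that False by (cases "x i = m") (force simp: prod_zero_iff)+
  then show ?thesis by simp
qed

lemma sum_div_max_deviation_eq:
  fixes x :: "'i \<Rightarrow> real"
  assumes "finite N" "i \<in> N" "x i = 2 ^ k" "\<And>j. j \<in> N \<Longrightarrow> 0 < x j \<and> x j \<le> 2 ^ k"
  shows "(\<Sum>j\<in>N. x j) / 2 ^ k - real (card N) * real k / 2 ^ k - 1
    = (\<Sum>j\<in>N - {i}. centred_trunc k (x j)) - real k / 2 ^ k"
proof -
  have "(\<Sum>j\<in>N - {i}. centred_trunc k (x j)) = (\<Sum>j\<in>N - {i}. (x j - real k) / 2 ^ k)"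
    using assms(4) by (intro sum.cong) (auto simp: centred_trunc_def indicator_def)
  also have "\<dots> = ((\<Sum>j\<in>N - {i}. x j) - real (card N - 1) * real k) / 2 ^ k"
    using assms(1,2) by (simp add: sum_divide_distrib[symmetric] sum_subtractf)
  finally have centred: "(\<Sum>j\<in>N - {i}. centred_trunc k (x j))
      = ((\<Sum>j\<in>N - {i}. x j) - real (card N - 1) * real k) / 2 ^ k" .
  have "real (card N - 1) = real (card N) - 1"
    using assms(1,2) card_gt_0_iff[of N] by (auto simp: of_nat_diff)
  then show ?thesis
    unfolding centred using sum.remove[OF assms(1,2), of x] assms(3) by (simp add: field_simps)
qed

lemma deviation_le_sum_indicator_sq:
  fixes x :: "'i \<Rightarrow> real"
  assumes N: "finite N" "N \<noteq> {}" and \<epsilon>: "\<epsilon> > 0" and small: "real k / 2 ^ k \<le> \<epsilon> / 2"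
    and pos: "\<And>j. j \<in> N \<Longrightarrow> 0 < x j" and max: "Max (x ` N) = 2 ^ k"
    and dev: "\<epsilon> < \<bar>(\<Sum>j\<in>N. x j) / Max (x ` N) - real (card N) * real k / 2 ^ k - 1\<bar>"
  shows "1 \<le> 4 / \<epsilon>\<^sup>2 * (\<Sum>i\<in>N. indicator {2 ^ k} (x i) * (\<Sum>j\<in>N - {i}. centred_trunc k (x j))\<^sup>2)"
proof -
  have "Max (x ` N) \<in> x ` N"
    using N by (intro Max_in) auto
  then obtain i where i: "i \<in> N" "x i = 2 ^ k"
    using max by auto
  have le: "x j \<le> 2 ^ k" if "j \<in> N" for j
    using N that max by (metis Max_ge finite_imageI image_eqI)
  define T where "T = (\<Sum>j\<in>N - {i}. centred_trunc k (x j))"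
  have "(\<Sum>j\<in>N. x j) / Max (x ` N) - real (card N) * real k / 2 ^ k - 1 = T - real k / 2 ^ k"
    using sum_div_max_deviation_eq[of N i x k] N i pos le unfolding T_def max by auto
  then have "\<epsilon> < \<bar>T - real k / 2 ^ k\<bar>"
    using dev by simp
  then have "\<epsilon> / 2 < \<bar>T\<bar>"
    using small by (intro abs_gt_half_of_abs_diff_gt) auto
  then have "(\<epsilon> / 2)\<^sup>2 \<le> T\<^sup>2"
    using \<epsilon> power_mono[of "\<epsilon> / 2" "\<bar>T\<bar>" 2] by simp
  then have "1 \<le> 4 / \<epsilon>\<^sup>2 * T\<^sup>2"
    using \<epsilon> by (simp add: field_simps power2_eq_square)
  moreover have "T\<^sup>2 \<le> (\<Sum>i\<in>N. indicator {2 ^ k} (x i) * (\<Sum>j\<in>N - {i}. centred_trunc k (x j))\<^sup>2)"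
    using member_le_sum[OF i(1), of "\<lambda>i. indicator {2 ^ k} (x i) * (\<Sum>j\<in>N - {i}. centred_trunc k (x j))\<^sup>2"]
      N i by (simp add: T_def)
  ultimately show ?thesis
    using mult_left_mono[of "T\<^sup>2" _ "4 / \<epsilon>\<^sup>2"] by fastforce
qed

context prob_space
begin

lemma expectation_indicator_comp:
  assumes "Y \<in> borel_measurable M" "A \<in> sets borel"
  shows "expectation (\<lambda>\<omega>. indicator A (Y \<omega>)) = prob {\<omega> \<in> space M. Y \<omega> \<in> A}"
proof -
  have "expectation (\<lambda>\<omega>. indicator A (Y \<omega>) :: real) = expectation (indicator {\<omega> \<in> space M. Y \<omega> \<in> A})"
    by (rule Bochner_Integration.integral_cong) (auto simp: indicator_def)
  then show ?thesis by (simp add: Int_absorb2)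
qed

lemma indep_vars_bounded_prod:
  fixes g :: "'i \<Rightarrow> real \<Rightarrow> real"
  assumes indep: "indep_vars (\<lambda>_. borel) X I" and J: "finite J" "J \<subseteq> I"
    and g: "\<And>t. t \<in> J \<Longrightarrow> g t \<in> borel_measurable borel"
    and bound: "\<And>t x. t \<in> J \<Longrightarrow> \<bar>g t x\<bar> \<le> B t"
  shows "integrable M (\<lambda>\<omega>. \<Prod>t\<in>J. g t (X t \<omega>))"
    and "expectation (\<lambda>\<omega>. \<Prod>t\<in>J. g t (X t \<omega>)) = (\<Prod>t\<in>J. expectation (\<lambda>\<omega>. g t (X t \<omega>)))"
proof -
  have indep_J: "indep_vars (\<lambda>_. borel) (\<lambda>t \<omega>. g t (X t \<omega>)) J"
    by (rule indep_vars_compose2[OF indep_vars_subset[OF indep J(2)]]) (use g in auto)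
  have "integrable M (\<lambda>\<omega>. g t (X t \<omega>))" if "t \<in> J" for t
  proof (rule integrable_const_bound[where B="B t"])
    show "AE \<omega> in M. norm (g t (X t \<omega>)) \<le> B t"
      using bound that by auto
    show "(\<lambda>\<omega>. g t (X t \<omega>)) \<in> borel_measurable M"
      using indep_J that by (auto simp: indep_vars_def)
  qed
  then show "integrable M (\<lambda>\<omega>. \<Prod>t\<in>J. g t (X t \<omega>))"
    and "expectation (\<lambda>\<omega>. \<Prod>t\<in>J. g t (X t \<omega>)) = (\<Prod>t\<in>J. expectation (\<lambda>\<omega>. g t (X t \<omega>)))"
    using indep_vars_integrable[OF J(1) indep_J] indep_vars_lebesgue_integral[OF J(1) indep_J]
    by auto
qed

end

locale st_petersburg_sequence = prob_space M for M :: "'a measure" +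
  fixes X :: "nat \<Rightarrow> 'a \<Rightarrow> real"
  assumes measurable_X: "\<And>i. i \<ge> 1 \<Longrightarrow> X i \<in> borel_measurable M"
    and indep_X: "indep_vars (\<lambda>_. borel) X {1..}"
    and prob_X_eq: "\<And>i j. i \<ge> 1 \<Longrightarrow> j \<ge> 1 \<Longrightarrow> prob {\<omega> \<in> space M. X i \<omega> = 2 ^ j} = 1 / 2 ^ j"
begin

lemma AE_X_power2:
  assumes "i \<ge> 1"
  shows "AE \<omega> in M. \<exists>l\<ge>1. X i \<omega> = 2 ^ l"
proof -
  define A where "A l = {\<omega> \<in> space M. X i \<omega> = 2 ^ Suc l}" for l
  have "range A \<subseteq> sets M"
    unfolding A_def using measurable_X[OF assms] by auto
  moreover have "disjoint_family A"
    unfolding A_def disjoint_family_on_def by auto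
  ultimately have "(\<lambda>l. prob (A l)) sums prob (\<Union>l. A l)"
    by (rule finite_measure_UNION)
  moreover have "(\<lambda>l. prob (A l)) = (\<lambda>l. (1 / 2) ^ Suc l)"
    unfolding A_def by (subst prob_X_eq[OF assms]) (auto simp: power_one_over)
  ultimately have "prob (\<Union>l. A l) = 1"
    using power_half_series sums_unique2 by metis
  then have "AE \<omega> in M. \<omega> \<in> (\<Union>l. A l)"
    by (rule AE_prob_1)
  then show ?thesis
    by eventually_elim (auto simp: A_def intro: exI[of _ "Suc _"])
qed

lemma AE_X_pos: "AE \<omega> in M. \<forall>j\<in>{1..n}. 0 < X j \<omega>"
proof (rule AE_finite_allI)
  fix j :: nat assume "j \<in> {1..n}"
  then have "j \<ge> 1" by simp
  from AE_X_power2[OF this] show "AE \<omega> in M. 0 < X j \<omega>"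
    by eventually_elim auto
qed simp

lemma measurable_S [measurable]: "S X n \<in> borel_measurable M"
  unfolding S_def by (intro borel_measurable_sum measurable_X) auto

lemma measurable_Xmax [measurable]: "Xmax X n \<in> borel_measurable M"
  unfolding Xmax_def by (intro borel_measurable_Max measurable_X) auto

lemma expectation_indicator_X_eq:
  assumes "i \<ge> 1" "j \<ge> 1"
  shows "expectation (\<lambda>\<omega>. indicator {(2::real) ^ j} (X i \<omega>) :: real) = 1 / 2 ^ j"
  using assms by (simp add: expectation_indicator_comp measurable_X prob_X_eq)

lemma integrable_indicator_X:
  assumes "i \<ge> 1" "A \<in> sets borel"
  shows "integrable M (\<lambda>\<omega>. indicator A (X i \<omega>) :: real)"
  by (rule integrable_const_bound[where B=1]) (use measurable_X[OF assms(1)] assms(2) in auto)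

text \<open>Almost surely \<open>X\<^sub>i\<close> is a power of two, so \<open>\<phi>\<close> of the truncation is a finite step function.\<close>

lemma expectation_trunc:
  fixes \<phi> :: "real \<Rightarrow> real"
  assumes i: "i \<ge> 1" and \<phi>: "\<phi> \<in> borel_measurable borel"
  shows "expectation (\<lambda>\<omega>. \<phi> (indicator {0<..(2::real) ^ k} (X i \<omega>) * X i \<omega>))
    = \<phi> 0 + (\<Sum>l\<in>{1..k}. (\<phi> (2 ^ l) - \<phi> 0) / 2 ^ l)"
proof -
  let ?step = "\<lambda>x::real. \<phi> 0 + (\<Sum>l\<in>{1..k}. (\<phi> (2 ^ l) - \<phi> 0) * indicator {2 ^ l} x)"
  have "\<phi> (indicator {0<..(2::real) ^ k} (2 ^ j) * 2 ^ j) = ?step (2 ^ j)" if "j \<ge> 1" for j :: nat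
  proof -
    have "(\<Sum>l\<in>{1..k}. (\<phi> (2 ^ l) - \<phi> 0) * indicator {2 ^ l} ((2::real) ^ j))
        = (\<Sum>l\<in>{1..k}. if l = j then \<phi> (2 ^ l) - \<phi> 0 else 0)"
      by (rule sum.cong) (auto simp: indicator_def)
    then show ?thesis
      using that by (cases "j \<le> k") (auto simp: indicator_def)
  qed
  note step = this
  have "AE \<omega> in M. \<phi> (indicator {0<..(2::real) ^ k} (X i \<omega>) * X i \<omega>) = ?step (X i \<omega>)"
    using AE_X_power2[OF i] by eventually_elim (auto simp: step)
  moreover note [measurable] = measurable_X[OF i] \<phi>
  ultimately have "expectation (\<lambda>\<omega>. \<phi> (indicator {0<..(2::real) ^ k} (X i \<omega>) * X i \<omega>))
      = expectation (\<lambda>\<omega>. ?step (X i \<omega>))"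
    by (intro integral_cong_AE) measurable
  also have "\<dots> = \<phi> 0 + (\<Sum>l\<in>{1..k}. (\<phi> (2 ^ l) - \<phi> 0) * expectation (\<lambda>\<omega>. indicator {2 ^ l} (X i \<omega>)))"
    using integrable_indicator_X[OF i, of "{2 ^ _}"]
    by (simp only: Bochner_Integration.integral_add Bochner_Integration.integral_sum
        Bochner_Integration.integrable_sum Bochner_Integration.integrable_mult_right
        Bochner_Integration.integral_mult_right_zero integrable_const borel_closed closed_singleton)
      (simp add: prob_space)
  also have "\<dots> = \<phi> 0 + (\<Sum>l\<in>{1..k}. (\<phi> (2 ^ l) - \<phi> 0) / 2 ^ l)"
    using i by (simp add: expectation_indicator_X_eq)
  finally show ?thesis .
qed

lemma expectation_centred_trunc: "i \<ge> 1 \<Longrightarrow> expectation (\<lambda>\<omega>. centred_trunc k (X i \<omega>)) = 0"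
  using expectation_trunc[of i "\<lambda>y. (y - real k) / 2 ^ k" k]
  by (simp add: centred_trunc_def diff_divide_distrib sum_subtractf)

lemma expectation_centred_trunc_sq_le:
  assumes i: "i \<ge> 1"
  shows "expectation (\<lambda>\<omega>. (centred_trunc k (X i \<omega>))\<^sup>2) \<le> 2 / 2 ^ k"
proof -
  have "expectation (\<lambda>\<omega>. (centred_trunc k (X i \<omega>))\<^sup>2)
      = expectation (\<lambda>\<omega>. (\<lambda>y. ((y - real k) / 2 ^ k)\<^sup>2) (indicator {0<..(2::real) ^ k} (X i \<omega>) * X i \<omega>))"
    by (simp add: centred_trunc_def)
  also have "\<dots> = ((0 - real k) / 2 ^ k)\<^sup>2 + (\<Sum>l\<in>{1..k}. (((2 ^ l - real k) / 2 ^ k)\<^sup>2 - ((0 - real k) / 2 ^ k)\<^sup>2) / 2 ^ l)"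
    by (rule expectation_trunc[OF i]) measurable
  also have "\<dots> = ((0 - real k) / 2 ^ k)\<^sup>2 + (\<Sum>l\<in>{1..k}. (2 ^ l - 2 * real k) / (2 ^ k)\<^sup>2)"
    by (intro arg_cong2[where f="(+)"] refl sum.cong) (auto simp: field_simps power2_eq_square)
  also have "\<dots> = ((\<Sum>l\<in>{1..k}. 2 ^ l) - (real k)\<^sup>2) / (2 ^ k)\<^sup>2"
    by (simp add: sum_divide_distrib[symmetric] sum_subtractf field_simps power2_eq_square)
  also have "\<dots> \<le> 2 * 2 ^ k / (2 ^ k)\<^sup>2"
    using sum_power2_le[of k] zero_le_power2[of "real k"] by (intro divide_right_mono) (linarith, simp)
  also have "\<dots> = 2 / 2 ^ k"
    by (simp add: power2_eq_square)
  finally show ?thesis .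
qed

lemma expectation_indicator_X_less_ge:
  assumes i: "i \<ge> 1" and k: "k \<ge> 1"
  shows "1 - 2 / 2 ^ k \<le> expectation (\<lambda>\<omega>. indicator {..<(2::real) ^ k} (X i \<omega>) :: real)"
proof -
  have pointwise: "(\<Sum>l\<in>{1..<k}. indicator {(2::real) ^ l} x) \<le> (indicator {..<(2::real) ^ k} x :: real)"
    for x :: real
  proof (cases "\<exists>j\<in>{1..<k}. x = 2 ^ j")
    case True
    then obtain j where j: "j \<in> {1..<k}" "x = 2 ^ j" by auto
    then have "(\<Sum>l\<in>{1..<k}. indicator {(2::real) ^ l} x) = (\<Sum>l\<in>{1..<k}. if l = j then 1 else 0 :: real)"
      by (intro sum.cong) (auto simp: indicator_def)
    then show ?thesis
      using j by (simp add: indicator_def)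
  next
    case False
    then show ?thesis by (simp add: indicator_def)
  qed
  have "1 - 2 / 2 ^ k = (\<Sum>l\<in>{1..<k}. expectation (\<lambda>\<omega>. indicator {(2::real) ^ l} (X i \<omega>) :: real))"
    using i sum_inverse_power2[OF k] by (simp add: expectation_indicator_X_eq)
  also have "\<dots> = expectation (\<lambda>\<omega>. \<Sum>l\<in>{1..<k}. indicator {(2::real) ^ l} (X i \<omega>))"
    by (rule Bochner_Integration.integral_sum[symmetric]) (auto intro: integrable_indicator_X[OF i])
  also have "\<dots> \<le> expectation (\<lambda>\<omega>. indicator {..<(2::real) ^ k} (X i \<omega>))"
    by (intro integral_mono pointwise integrable_indicator_X[OF i] Bochner_Integration.integrable_sum) auto
  finally show ?thesis .
qed

lemma indicator_centred_trunc_cross_term: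
  assumes "i \<ge> 1" "j \<ge> 1" "l \<ge> 1" "i \<noteq> j" "i \<noteq> l" "k \<ge> 1"
  defines "f \<equiv> \<lambda>\<omega>. indicator {(2::real) ^ k} (X i \<omega>) * (centred_trunc k (X j \<omega>) * centred_trunc k (X l \<omega>))"
  shows "integrable M f"
    and "expectation f \<le> (if j = l then 2 / (2 ^ k)\<^sup>2 else 0)"
proof -
  define g where "g t = (if t = i then indicator {(2::real) ^ k}
    else if j = l then (\<lambda>x. (centred_trunc k x)\<^sup>2) else centred_trunc k)" for t
  have f: "f = (\<lambda>\<omega>. \<Prod>t\<in>{i, j, l}. g t (X t \<omega>))"
    using assms(4,5) by (cases "j = l") (auto simp: f_def g_def power2_eq_square)
  have g_bound: "\<bar>g t x\<bar> \<le> (1 + real k)\<^sup>2" for t x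
  proof -
    have "\<bar>centred_trunc k x\<bar> \<le> 1 + real k" "1 + real k \<le> (1 + real k)\<^sup>2"
      using abs_centred_trunc_le by (auto simp: power2_eq_square)
    moreover have "\<bar>centred_trunc k x\<bar>\<^sup>2 \<le> (1 + real k)\<^sup>2"
      using abs_centred_trunc_le by (intro power_mono) auto
    ultimately show ?thesis
      by (auto simp: g_def indicator_def)
  qed
  note prod = indep_vars_bounded_prod[OF indep_X, of "{i, j, l}" g "\<lambda>_. (1 + real k)\<^sup>2"]
  show "integrable M f"
    unfolding f using assms(1-3) g_bound by (intro prod(1)) (auto simp: g_def)
  have "expectation f = (\<Prod>t\<in>{i, j, l}. expectation (\<lambda>\<omega>. g t (X t \<omega>)))"
    unfolding f using assms(1-3) g_bound by (intro prod(2)) (auto simp: g_def)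
  also have "\<dots> = 1 / 2 ^ k * (if j = l then expectation (\<lambda>\<omega>. (centred_trunc k (X j \<omega>))\<^sup>2) else 0)"
    using assms by (cases "j = l") (auto simp: g_def expectation_indicator_X_eq expectation_centred_trunc)
  also have "\<dots> \<le> 1 / 2 ^ k * (if j = l then 2 / 2 ^ k else 0)"
    using expectation_centred_trunc_sq_le[OF assms(2)] by (intro mult_left_mono) auto
  finally show "expectation f \<le> (if j = l then 2 / (2 ^ k)\<^sup>2 else 0)"
    by (cases "j = l") (simp_all add: power2_eq_square)
qed

lemma expectation_indicator_sq_sum_le:
  assumes N: "finite N" "N \<subseteq> {1..}" "i \<in> N" and k: "k \<ge> 1"
  defines "H \<equiv> \<lambda>\<omega>. indicator {(2::real) ^ k} (X i \<omega>) * (\<Sum>j\<in>N - {i}. centred_trunc k (X j \<omega>))\<^sup>2"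
  shows "integrable M H"
    and "expectation H \<le> real (card N) * (2 / (2 ^ k)\<^sup>2)"
proof -
  define f where "f j l \<omega> = indicator {(2::real) ^ k} (X i \<omega>) * (centred_trunc k (X j \<omega>) * centred_trunc k (X l \<omega>))"
    for j l \<omega>
  have H: "H = (\<lambda>\<omega>. \<Sum>j\<in>N - {i}. \<Sum>l\<in>N - {i}. f j l \<omega>)"
    unfolding H_def f_def power2_eq_square sum_product by (simp add: sum_distrib_left)
  have f: "integrable M (f j l)" "expectation (f j l) \<le> (if j = l then 2 / (2 ^ k)\<^sup>2 else 0)"
    if "j \<in> N - {i}" "l \<in> N - {i}" for j l
  proof -
    have "i \<ge> 1" "j \<ge> 1" "l \<ge> 1"
      using that N by auto
    then show "integrable M (f j l)" "expectation (f j l) \<le> (if j = l then 2 / (2 ^ k)\<^sup>2 else 0)"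
      using indicator_centred_trunc_cross_term[of i j l k] that k unfolding f_def by auto
  qed
  show "integrable M H"
    unfolding H using f by (intro Bochner_Integration.integrable_sum) auto
  have "expectation H = (\<Sum>j\<in>N - {i}. \<Sum>l\<in>N - {i}. expectation (f j l))"
    unfolding H using f
    by (subst Bochner_Integration.integral_sum, fastforce intro: Bochner_Integration.integrable_sum)
      (auto intro!: sum.cong Bochner_Integration.integral_sum)
  also have "\<dots> \<le> (\<Sum>j\<in>N - {i}. \<Sum>l\<in>N - {i}. if j = l then 2 / (2 ^ k)\<^sup>2 else 0)"
    using f by (intro sum_mono) auto
  also have "\<dots> = real (card (N - {i})) * (2 / (2 ^ k)\<^sup>2)"
    using N by simp
  also have "\<dots> \<le> real (card N) * (2 / (2 ^ k)\<^sup>2)"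
    using N by (intro mult_right_mono) (auto simp: card_Diff_subset)
  finally show "expectation H \<le> real (card N) * (2 / (2 ^ k)\<^sup>2)" .
qed

lemma prob_deviation_and_Xmax_le:
  assumes n: "n \<ge> 1" and k: "k \<ge> 1" and \<epsilon>: "\<epsilon> > 0" and small: "real k / 2 ^ k \<le> \<epsilon> / 2"
  shows "prob {\<omega> \<in> space M. \<epsilon> < \<bar>S X n \<omega> / Xmax X n \<omega> - real n * real k / 2 ^ k - 1\<bar> \<and> Xmax X n \<omega> = 2 ^ k}
    \<le> 8 / \<epsilon>\<^sup>2 * (real n / 2 ^ k)\<^sup>2"
proof -
  define N where "N = {1..n}"
  define H where "H i \<omega> = indicator {(2::real) ^ k} (X i \<omega>) * (\<Sum>j\<in>N - {i}. centred_trunc k (X j \<omega>))\<^sup>2"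
    for i \<omega>
  define B where "B = {\<omega> \<in> space M. \<epsilon> < \<bar>S X n \<omega> / Xmax X n \<omega> - real n * real k / 2 ^ k - 1\<bar> \<and> Xmax X n \<omega> = 2 ^ k}"
  have N: "finite N" "N \<subseteq> {1..}" "card N = n"
    by (auto simp: N_def)
  note H = expectation_indicator_sq_sum_le[OF N(1,2) _ k, folded H_def]
  have "B \<in> sets M"
    unfolding B_def by measurable
  have AE_indicator_le: "AE \<omega> in M. indicator B \<omega> \<le> 4 / \<epsilon>\<^sup>2 * (\<Sum>i\<in>N. H i \<omega>)"
    using AE_X_pos[of n]
  proof eventually_elim
    case (elim \<omega>)
    have "0 \<le> 4 / \<epsilon>\<^sup>2 * (\<Sum>i\<in>N. H i \<omega>)"
      by (intro mult_nonneg_nonneg sum_nonneg) (auto simp: H_def)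
    moreover have "1 \<le> 4 / \<epsilon>\<^sup>2 * (\<Sum>i\<in>N. H i \<omega>)" if "\<omega> \<in> B"
      using deviation_le_sum_indicator_sq[OF N(1) _ \<epsilon> small, of "\<lambda>j. X j \<omega>"] elim that n
      by (auto simp: B_def H_def N_def S_def Xmax_def)
    ultimately show ?case
      by (auto simp: indicator_def)
  qed
  have "prob B = expectation (indicator B)"
    using \<open>B \<in> sets M\<close> by (simp add: Int_absorb2)
  also have "\<dots> \<le> expectation (\<lambda>\<omega>. 4 / \<epsilon>\<^sup>2 * (\<Sum>i\<in>N. H i \<omega>))"
    using AE_indicator_le \<open>B \<in> sets M\<close> H(1)
    by (intro integral_mono_AE Bochner_Integration.integrable_mult_right Bochner_Integration.integrable_sum)
      (auto simp: integrable_indicator_iff Int_absorb2 less_top[symmetric])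
  also have "\<dots> = 4 / \<epsilon>\<^sup>2 * (\<Sum>i\<in>N. expectation (H i))"
    using H(1) by (simp add: Bochner_Integration.integral_sum)
  also have "\<dots> \<le> 4 / \<epsilon>\<^sup>2 * (\<Sum>i\<in>N. real n * (2 / (2 ^ k)\<^sup>2))"
    using H(2) N(3) by (intro mult_left_mono sum_mono) auto
  also have "\<dots> = 8 / \<epsilon>\<^sup>2 * (real n / 2 ^ k)\<^sup>2"
    using N(3) by (simp add: power2_eq_square)
  finally show ?thesis
    unfolding B_def .
qed

text \<open>
  The event "\<open>X\<^sub>i = 2^k\<close> and \<open>X\<^sub>t < 2^k\<close> for all \<open>t \<noteq> i\<close>", as a product of indicators; by
  Bernoulli's inequality its probability is at least \<open>(1/2^k)(1 - 2(n - 1)/2^k)\<close>.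
\<close>

lemma expectation_unique_max_ge:
  assumes i: "i \<in> {1..n}" and k: "k \<ge> 1" and small: "4 * real n \<le> 2 ^ k"
  shows "1 / (2 * 2 ^ k)
    \<le> expectation (\<lambda>\<omega>. \<Prod>t\<in>{1..n}. indicator (if t = i then {(2::real) ^ k} else {..<2 ^ k}) (X t \<omega>) :: real)"
proof -
  define m :: real where "m = 2 ^ k"
  have m: "2 \<le> m"
    using k by (simp add: m_def self_le_power)
  define P where "P = (\<Prod>t\<in>{1..n} - {i}. expectation (\<lambda>\<omega>. indicator {..<m} (X t \<omega>) :: real))"
  have "expectation (\<lambda>\<omega>. \<Prod>t\<in>{1..n}. indicator (if t = i then {m} else {..<m}) (X t \<omega>) :: real)
      = (\<Prod>t\<in>{1..n}. expectation (\<lambda>\<omega>. indicator (if t = i then {m} else {..<m}) (X t \<omega>) :: real))"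
    by (rule indep_vars_bounded_prod(2)[OF indep_X, where B="\<lambda>_. 1"]) auto
  also have "\<dots> = expectation (\<lambda>\<omega>. indicator {m} (X i \<omega>) :: real)
      * (\<Prod>t\<in>{1..n} - {i}. expectation (\<lambda>\<omega>. indicator (if t = i then {m} else {..<m}) (X t \<omega>) :: real))"
    using i by (subst prod.remove[of _ i]) auto
  also have "\<dots> = 1 / m * P"
    using i k unfolding P_def m_def by (auto simp: expectation_indicator_X_eq intro!: prod.cong)
  finally have E: "expectation (\<lambda>\<omega>. \<Prod>t\<in>{1..n}. indicator (if t = i then {m} else {..<m}) (X t \<omega>) :: real)
      = 1 / m * P" .
  have "(1 - 2 / m) ^ (n - 1) \<le> P"
    using prod_mono[of "{1..n} - {i}" "\<lambda>_. 1 - 2 / m"] expectation_indicator_X_less_ge[OF _ k] m i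
    unfolding P_def m_def by (auto simp: card_Diff_singleton)
  moreover have "1 + real (n - 1) * (- 2 / m) \<le> (1 - 2 / m) ^ (n - 1)"
    using Bernoulli_inequality[of "- 2 / m" "n - 1"] m by simp
  moreover have "real (n - 1) * (2 / m) \<le> 1 / 2"
    using small m by (simp add: m_def field_simps of_nat_diff)
  ultimately have "1 / 2 \<le> P"
    by linarith
  then have "1 / (2 * m) \<le> expectation (\<lambda>\<omega>. \<Prod>t\<in>{1..n}. indicator (if t = i then {m} else {..<m}) (X t \<omega>) :: real)"
    using E m by (simp add: field_simps)
  from this[unfolded m_def] show ?thesis .
qed

lemma prob_Xmax_eq_ge:
  assumes k: "k \<ge> 1" and small: "4 * real n \<le> 2 ^ k"
  shows "real n / (2 * 2 ^ k) \<le> prob {\<omega> \<in> space M. Xmax X n \<omega> = 2 ^ k}"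
proof -
  define G where "G i \<omega> = (\<Prod>t\<in>{1..n}. indicator (if t = i then {(2::real) ^ k} else {..<2 ^ k}) (X t \<omega>) :: real)"
    for i \<omega>
  have G: "integrable M (G i)" for i
    unfolding G_def by (rule indep_vars_bounded_prod(1)[OF indep_X, where B="\<lambda>_. 1"]) auto
  have "real n / (2 * 2 ^ k) = (\<Sum>i\<in>{1..n}. 1 / (2 * 2 ^ k))"
    by simp
  also have "\<dots> \<le> (\<Sum>i\<in>{1..n}. expectation (G i))"
    unfolding G_def using expectation_unique_max_ge[OF _ k small] by (intro sum_mono) auto
  also have "\<dots> = expectation (\<lambda>\<omega>. \<Sum>i\<in>{1..n}. G i \<omega>)"
    using G by (simp add: Bochner_Integration.integral_sum)
  also have "\<dots> \<le> expectation (\<lambda>\<omega>. indicator {2 ^ k} (Xmax X n \<omega>))"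
  proof (intro integral_mono Bochner_Integration.integrable_sum G)
    show "integrable M (\<lambda>\<omega>. indicator {2 ^ k} (Xmax X n \<omega>) :: real)"
      by (intro integrable_const_bound[where B=1]) auto
    show "(\<Sum>i\<in>{1..n}. G i \<omega>) \<le> indicator {2 ^ k} (Xmax X n \<omega>)" for \<omega>
      unfolding G_def Xmax_def by (rule sum_prod_indicator_unique_max_le) simp
  qed
  also have "\<dots> = prob {\<omega> \<in> space M. Xmax X n \<omega> = 2 ^ k}"
    by (simp add: expectation_indicator_comp)
  finally show ?thesis .
qed

lemma cond_prob_deviation_le:
  assumes k: "k \<ge> 1" and n: "n \<ge> 1" and \<epsilon>: "\<epsilon> > 0"
    and small: "real k / 2 ^ k \<le> \<epsilon> / 2" "4 * real n \<le> 2 ^ k"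
  shows "cond_prob M (\<lambda>\<omega>. \<epsilon> < \<bar>S X n \<omega> / Xmax X n \<omega> - real n * real k / 2 ^ k - 1\<bar>)
      (\<lambda>\<omega>. Xmax X n \<omega> = 2 ^ k)
    \<le> 16 / \<epsilon>\<^sup>2 * (real n / 2 ^ k)"
proof -
  define r where "r = real n / 2 ^ k"
  have r: "0 < r"
    using n by (simp add: r_def)
  have "cond_prob M (\<lambda>\<omega>. \<epsilon> < \<bar>S X n \<omega> / Xmax X n \<omega> - real n * real k / 2 ^ k - 1\<bar>)
      (\<lambda>\<omega>. Xmax X n \<omega> = 2 ^ k) \<le> (8 / \<epsilon>\<^sup>2 * r\<^sup>2) / (r / 2)"
    using prob_deviation_and_Xmax_le[OF n k \<epsilon> small(1)] prob_Xmax_eq_ge[OF k small(2)] r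
    unfolding cond_prob_def r_def by (intro frac_le) (auto simp: field_simps)
  also have "\<dots> = 16 / \<epsilon>\<^sup>2 * r"
    using r by (simp add: field_simps power2_eq_square)
  finally show ?thesis
    unfolding r_def .
qed

end

lemma tendsto_div_power2_of_growth:
  fixes k :: "nat \<Rightarrow> nat"
  assumes growth: "filterlim (\<lambda>n. 2 ^ k n / real n) at_top sequentially"
  shows "(\<lambda>n. real n / 2 ^ k n) \<longlonglongrightarrow> 0"
    and "(\<lambda>n. real (k n) / 2 ^ k n) \<longlonglongrightarrow> 0"
proof -
  show "(\<lambda>n. real n / 2 ^ k n) \<longlonglongrightarrow> 0"
    using tendsto_inverse_0_at_top[OF growth] by (simp add: inverse_divide)
  have "filterlim k at_top sequentially"
    unfolding filterlim_at_top
  proof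
    fix N :: nat
    have "eventually (\<lambda>n. 2 ^ N \<le> 2 ^ k n / real n \<and> n \<ge> 1) sequentially"
      using growth eventually_ge_at_top[of 1] unfolding filterlim_at_top by (auto intro: eventually_conj)
    then show "eventually (\<lambda>n. N \<le> k n) sequentially"
    proof (rule eventually_mono)
      fix n assume n: "2 ^ N \<le> 2 ^ k n / real n \<and> n \<ge> 1"
      then have "(2::real) ^ N \<le> 2 ^ k n"
        using order_trans[of _ "2 ^ k n / real n" "2 ^ k n"] by (auto simp: divide_le_eq)
      then show "N \<le> k n"
        by simp
    qed
  qed
  moreover have "((\<lambda>x::nat. real x / 2 ^ x) \<longlongrightarrow> 0) at_top"
    by real_asymp
  ultimately show "(\<lambda>n. real (k n) / 2 ^ k n) \<longlonglongrightarrow> 0"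
    using filterlim_compose by (fastforce simp: o_def)
qed

theorem proposition3:
  fixes M :: "'a measure" and X :: "nat \<Rightarrow> 'a \<Rightarrow> real" and k :: "nat \<Rightarrow> nat"
  assumes "prob_space M"
    and rv: "\<And>i. i \<ge> 1 \<Longrightarrow> X i \<in> borel_measurable M"
    and indep: "prob_space.indep_vars M (\<lambda>_. borel) X {1..}"
    and distr: "\<And>i j. i \<ge> 1 \<Longrightarrow> j \<ge> 1 \<Longrightarrow>
                  measure M {\<omega> \<in> space M. X i \<omega> = 2 ^ j} = 1 / 2 ^ j"
    and kpos: "\<And>n. n \<ge> 1 \<Longrightarrow> k n \<ge> 1"
    and kgrowth: "filterlim (\<lambda>n. 2 ^ k n / real n) at_top sequentially"
  shows "\<forall>\<epsilon>>0. (\<lambda>n. cond_prob M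
            (\<lambda>\<omega>. \<bar>S X n \<omega> / Xmax X n \<omega> - real n * real (k n) / 2 ^ k n - 1\<bar> > \<epsilon>)
            (\<lambda>\<omega>. Xmax X n \<omega> = 2 ^ k n))
         \<longlonglongrightarrow> 0"
proof (intro allI impI)
  fix \<epsilon> :: real assume \<epsilon>: "\<epsilon> > 0"
  interpret st_petersburg_sequence M X
    using assms(1) rv indep distr by (intro st_petersburg_sequence.intro st_petersburg_sequence_axioms.intro)
  note lim = tendsto_div_power2_of_growth[OF kgrowth]
  have "eventually (\<lambda>n. real (k n) / 2 ^ k n < \<epsilon> / 2 \<and> real n / 2 ^ k n < 1 / 4 \<and> n \<ge> 1) sequentially"
    using \<epsilon> by (intro eventually_conj order_tendstoD(2)[OF lim(2)] order_tendstoD(2)[OF lim(1)]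
      eventually_ge_at_top) auto
  then have upper: "eventually (\<lambda>n. cond_prob M
            (\<lambda>\<omega>. \<bar>S X n \<omega> / Xmax X n \<omega> - real n * real (k n) / 2 ^ k n - 1\<bar> > \<epsilon>)
            (\<lambda>\<omega>. Xmax X n \<omega> = 2 ^ k n) \<le> 16 / \<epsilon>\<^sup>2 * (real n / 2 ^ k n)) sequentially"
    by eventually_elim (intro cond_prob_deviation_le kpos \<epsilon>, auto simp: field_simps)
  have bound_lim: "(\<lambda>n. 16 / \<epsilon>\<^sup>2 * (real n / 2 ^ k n)) \<longlonglongrightarrow> 0"
    by (rule tendsto_mult_right_zero[OF lim(1)])
  show "(\<lambda>n. cond_prob M
            (\<lambda>\<omega>. \<bar>S X n \<omega> / Xmax X n \<omega> - real n * real (k n) / 2 ^ k n - 1\<bar> > \<epsilon>)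
            (\<lambda>\<omega>. Xmax X n \<omega> = 2 ^ k n)) \<longlonglongrightarrow> 0"
    by (rule tendsto_sandwich[OF _ upper tendsto_const bound_lim]) (simp add: cond_prob_def)
qed

end
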